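(* Let $G$ be a group and let $S=\bigoplus_{g\in G}S_g$ be virtually epsilon-strongly $G$-graded where, for each $g\in G$, $M_g$ is a set of pairwise orthogonal, commuting idempotents such that $E_g=\bigvee M_g$ is a set of local units for $S_gS_{g^{-1}}$. Then for every $g\in G$ and $s\in S_g$ there exist $m_1,\dots,m_i\in M_g$ and $m_1',\dots,m_j'\in M_{g^{-1}}$ such that $(m_1\vee\cdots\vee m_i)s=s$ and $s(m_1'\vee\cdots\vee m_j')=s$.
   Context: Rings are associative, not necessarily unital; $AB$ denotes finite sums of products. A $G$-grading: $S=\bigoplus_gS_g$, $S_gS_h\subseteq S_{gh}$. Idempotents are ordered by $a\le b$ iff $a=ab=ba$; $\vee$ is the least upper bound; $\bigvee M$ is the set of finite joins of elements of $M$. A set of local units for a ring $R$ is a $\vee$-closed set of pairwise commuting idempotents of $R$ such that every $r\in R$ has some $f$ in it with $fr=rf=r$. The grading is virtually epsilon-strong if $S_gS_{g^{-1}}S_g=S_g$ for all $g$ and each $S_gS_{g^{-1}}$ has enough idempotents (a set of pairwise orthogonal commuting idempotents whose $\vee$-closure is a set of local units). *)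

theory Defs
  imports Main "HOL-Algebra.Group"
begin

text \<open>Rings: Isabelle's type class ring is an associative, not necessarily unital ring.
  The group G is a HOL-Algebra group; the ring S is the whole carrier type.\<close>

definition setmult :: "('a::ring) set \<Rightarrow> 'a set \<Rightarrow> 'a set" where
  "setmult A B = {x. \<exists>(n::nat) a b. (\<forall>i<n. a i \<in> A \<and> b i \<in> B) \<and> x = (\<Sum>i<n. a i * b i)}"

definition add_subgroup :: "('a::ring) set \<Rightarrow> bool" where
  "add_subgroup A \<longleftrightarrow> 0 \<in> A \<and> (\<forall>x\<in>A. \<forall>y\<in>A. x + y \<in> A) \<and> (\<forall>x\<in>A. - x \<in> A)"

definition is_grading :: "('g, 'b) monoid_scheme \<Rightarrow> ('g \<Rightarrow> ('a::ring) set) \<Rightarrow> bool" where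
  "is_grading G Sg \<longleftrightarrow>
     (\<forall>g\<in>carrier G. add_subgroup (Sg g)) \<and>
     (\<forall>g\<in>carrier G. \<forall>h\<in>carrier G. setmult (Sg g) (Sg h) \<subseteq> Sg (g \<otimes>\<^bsub>G\<^esub> h)) \<and>
     (\<forall>s::'a. \<exists>F c. finite F \<and> F \<subseteq> carrier G \<and> (\<forall>g\<in>F. c g \<in> Sg g) \<and> s = (\<Sum>g\<in>F. c g)) \<and>
     (\<forall>F c. finite F \<and> F \<subseteq> carrier G \<and> (\<forall>g\<in>F. c g \<in> Sg g) \<and> (\<Sum>g\<in>F. c g) = 0
            \<longrightarrow> (\<forall>g\<in>F. c g = 0))"

definition idem :: "'a::ring \<Rightarrow> bool" where
  "idem e \<longleftrightarrow> e * e = e"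

definition idem_le :: "'a::ring \<Rightarrow> 'a \<Rightarrow> bool" where
  "idem_le a b \<longleftrightarrow> a = a * b \<and> a = b * a"

definition is_lub :: "('a::ring) set \<Rightarrow> 'a \<Rightarrow> bool" where
  "is_lub F c \<longleftrightarrow> idem c \<and> (\<forall>x\<in>F. idem_le x c) \<and>
      (\<forall>d. idem d \<and> (\<forall>x\<in>F. idem_le x d) \<longrightarrow> idem_le c d)"

definition joins :: "('a::ring) set \<Rightarrow> 'a set" where
  "joins M = {c. \<exists>F. finite F \<and> F \<noteq> {} \<and> F \<subseteq> M \<and> is_lub F c}"

definition commuting_idems :: "('a::ring) set \<Rightarrow> bool" where
  "commuting_idems E \<longleftrightarrow> (\<forall>e\<in>E. idem e) \<and> (\<forall>e\<in>E. \<forall>f\<in>E. e * f = f * e)"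

definition orthogonal :: "('a::ring) set \<Rightarrow> bool" where
  "orthogonal E \<longleftrightarrow> (\<forall>e\<in>E. \<forall>f\<in>E. e \<noteq> f \<longrightarrow> e * f = 0)"

definition local_units :: "('a::ring) set \<Rightarrow> 'a set \<Rightarrow> bool" where
  "local_units R E \<longleftrightarrow> E \<subseteq> R \<and> commuting_idems E \<and>
     (\<forall>e\<in>E. \<forall>f\<in>E. \<exists>c\<in>E. is_lub {e, f} c) \<and>
     (\<forall>r\<in>R. \<exists>f\<in>E. f * r = r \<and> r * f = r)"

definition enough_idems :: "('a::ring) set \<Rightarrow> bool" where
  "enough_idems R \<longleftrightarrow> (\<exists>M. M \<subseteq> R \<and> commuting_idems M \<and> orthogonal M \<and> local_units R (joins M))"

definition virt_eps_strong :: "('g, 'b) monoid_scheme \<Rightarrow> ('g \<Rightarrow> ('a::ring) set) \<Rightarrow> bool" where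
  "virt_eps_strong G Sg \<longleftrightarrow>
     (\<forall>g\<in>carrier G. setmult (setmult (Sg g) (Sg (inv\<^bsub>G\<^esub> g))) (Sg g) = Sg g) \<and>
     (\<forall>g\<in>carrier G. enough_idems (setmult (Sg g) (Sg (inv\<^bsub>G\<^esub> g))))"

end

theory Submission
  imports Defs
begin

text \<open>Write s in S_g = S_g S_g^-1 S_g as a finite sum of products a_i b_i with
  a_i in S_g S_g^-1. A local unit in E_g common to the finitely many a_i, which is a finite
  join of elements of M_g, then fixes s from the left. Regrouping the same sum as a sum of
  products x (y b) with y b in S_g^-1 S_g yields, in the same way, a unit in E_g^-1 fixing s
  from the right.\<close>

lemma sum_lessThan_add:
  "(\<Sum>i<n + m. (f::nat \<Rightarrow> 'a::comm_monoid_add) i) = (\<Sum>i<n. f i) + (\<Sum>i<m. f (i + n))"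
  by (induction m) (simp_all add: add.commute[of n] add.assoc)

lemma mem_setmult_iff:
  "x \<in> setmult A B \<longleftrightarrow> (\<exists>(n::nat) a b. (\<forall>i<n. a i \<in> A \<and> b i \<in> B) \<and> x = (\<Sum>i<n. a i * b i))"
  unfolding setmult_def by simp

lemma add_in_setmult:
  assumes "x \<in> setmult A B" and "y \<in> setmult A B"
  shows "x + y \<in> setmult (A::'a::ring set) B"
proof -
  obtain n :: nat and a b where ab: "\<forall>i<n. a i \<in> A \<and> b i \<in> B" and x: "x = (\<Sum>i<n. a i * b i)"
    using assms(1) unfolding mem_setmult_iff by blast
  obtain m :: nat and a' b' where ab': "\<forall>i<m. a' i \<in> A \<and> b' i \<in> B" and y: "y = (\<Sum>i<m. a' i * b' i)"
    using assms(2) unfolding mem_setmult_iff by blast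
  define p where "p i = (if i < n then a i else a' (i - n))" for i
  define q where "q i = (if i < n then b i else b' (i - n))" for i
  have "(\<Sum>i<n + m. p i * q i) = (\<Sum>i<n. p i * q i) + (\<Sum>i<m. p (i + n) * q (i + n))"
    by (rule sum_lessThan_add)
  also have "\<dots> = x + y"
    unfolding x y by (simp add: p_def q_def)
  finally have "x + y = (\<Sum>i<n + m. p i * q i)" by simp
  moreover have "\<forall>i<n + m. p i \<in> A \<and> q i \<in> B"
    using ab ab' unfolding p_def q_def by auto
  ultimately show ?thesis
    unfolding mem_setmult_iff by (intro exI[of _ "n + m"] exI[of _ p] exI[of _ q]) simp
qed

lemma zero_in_setmult: "(0::'a::ring) \<in> setmult A B"
  unfolding mem_setmult_iff by (rule exI[of _ "0::nat"]) simp

lemma mult_in_setmult: "a \<in> A \<Longrightarrow> b \<in> B \<Longrightarrow> (a * b :: 'a::ring) \<in> setmult A B"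
  unfolding mem_setmult_iff by (intro exI[of _ "1::nat"] exI[of _ "\<lambda>_. a"] exI[of _ "\<lambda>_. b"]) simp

lemma sum_in_setmult:
  assumes "finite I" and "\<And>i. i \<in> I \<Longrightarrow> f i \<in> setmult A B"
  shows "sum f I \<in> setmult (A::'a::ring set) B"
  using assms
proof (induction I rule: finite_induct)
  case empty
  show ?case by (simp add: zero_in_setmult)
next
  case (insert i I)
  then show ?case by (simp add: add_in_setmult)
qed

lemma mult_right_in_setmult_assoc:
  assumes "x \<in> setmult A B" and "c \<in> C"
  shows "x * c \<in> setmult A (setmult B (C::'a::ring set))"
proof -
  obtain n :: nat and a b where ab: "\<forall>i<n. a i \<in> A \<and> b i \<in> B" and x: "x = (\<Sum>i<n. a i * b i)"
    using assms(1) unfolding mem_setmult_iff by blast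
  have "x * c = (\<Sum>i<n. a i * (b i * c))"
    unfolding x by (simp add: sum_distrib_right mult.assoc)
  also have "\<dots> \<in> setmult A (setmult B C)"
    using ab assms(2) by (intro sum_in_setmult mult_in_setmult) auto
  finally show ?thesis .
qed

lemma setmult_assoc_subset: "setmult (setmult A B) C \<subseteq> setmult A (setmult B (C::'a::ring set))"
proof
  fix x assume "x \<in> setmult (setmult A B) C"
  then obtain n :: nat and a c where ac: "\<forall>i<n. a i \<in> setmult A B \<and> c i \<in> C"
    and x: "x = (\<Sum>i<n. a i * c i)"
    unfolding mem_setmult_iff by blast
  show "x \<in> setmult A (setmult B C)"
    unfolding x using ac by (intro sum_in_setmult mult_right_in_setmult_assoc) auto
qed

lemma setmult_finite_left:
  assumes "x \<in> setmult A B"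
  shows "\<exists>A'. finite A' \<and> A' \<subseteq> A \<and> x \<in> setmult A' (B::'a::ring set)"
proof -
  obtain n :: nat and a b where ab: "\<forall>i<n. a i \<in> A \<and> b i \<in> B" and x: "x = (\<Sum>i<n. a i * b i)"
    using assms unfolding mem_setmult_iff by blast
  have "x \<in> setmult (a ` {..<n}) B"
    unfolding mem_setmult_iff using ab x by (intro exI[of _ n] exI[of _ a] exI[of _ b]) simp
  moreover have "a ` {..<n} \<subseteq> A"
    using ab by blast
  ultimately show ?thesis by blast
qed

lemma setmult_finite_right:
  assumes "x \<in> setmult A B"
  shows "\<exists>B'. finite B' \<and> B' \<subseteq> B \<and> x \<in> setmult A (B'::'a::ring set)"
proof -
  obtain n :: nat and a b where ab: "\<forall>i<n. a i \<in> A \<and> b i \<in> B" and x: "x = (\<Sum>i<n. a i * b i)"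
    using assms unfolding mem_setmult_iff by blast
  have "x \<in> setmult A (b ` {..<n})"
    unfolding mem_setmult_iff using ab x by (intro exI[of _ n] exI[of _ a] exI[of _ b]) simp
  moreover have "b ` {..<n} \<subseteq> B"
    using ab by blast
  ultimately show ?thesis by blast
qed

lemma setmult_left_unit:
  assumes "\<And>a. a \<in> A \<Longrightarrow> e * a = a" and "x \<in> setmult A B"
  shows "e * x = (x::'a::ring)"
proof -
  obtain n :: nat and a b where ab: "\<forall>i<n. a i \<in> A \<and> b i \<in> B" and x: "x = (\<Sum>i<n. a i * b i)"
    using assms(2) unfolding mem_setmult_iff by blast
  have "e * x = (\<Sum>i<n. (e * a i) * b i)"
    unfolding x by (simp add: sum_distrib_left mult.assoc)
  also have "\<dots> = x"
    unfolding x using ab assms(1) by (intro sum.cong) auto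
  finally show ?thesis .
qed

lemma setmult_right_unit:
  assumes "\<And>b. b \<in> B \<Longrightarrow> b * e = b" and "x \<in> setmult A B"
  shows "x * e = (x::'a::ring)"
proof -
  obtain n :: nat and a b where ab: "\<forall>i<n. a i \<in> A \<and> b i \<in> B" and x: "x = (\<Sum>i<n. a i * b i)"
    using assms(2) unfolding mem_setmult_iff by blast
  have "x * e = (\<Sum>i<n. a i * (b i * e))"
    unfolding x by (simp add: sum_distrib_right mult.assoc)
  also have "\<dots> = x"
    unfolding x using ab assms(1) by (intro sum.cong) auto
  finally show ?thesis .
qed

lemma idem_le_two_sided_unit:
  assumes "idem_le e d" and "e * r = r" and "r * e = r"
  shows "d * r = (r::'a::ring) \<and> r * d = r"
proof -
  have "e = e * d" "e = d * e"
    using assms(1) unfolding idem_le_def by auto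
  then show ?thesis
    using assms(2,3) by (metis mult.assoc)
qed

lemma local_units_common_unit:
  assumes lu: "local_units R E" and "R \<noteq> {}" and "finite X" and "X \<subseteq> R"
  shows "\<exists>e\<in>E. \<forall>r\<in>X. e * r = r \<and> r * e = r"
  using \<open>finite X\<close> \<open>X \<subseteq> R\<close>
proof (induction X rule: finite_induct)
  case empty
  from lu \<open>R \<noteq> {}\<close> obtain e where "e \<in> E"
    unfolding local_units_def by blast
  then show ?case by blast
next
  case (insert x X)
  then obtain e where e: "e \<in> E" "\<forall>r\<in>X. e * r = r \<and> r * e = r"
    by blast
  from insert lu obtain f where f: "f \<in> E" "f * x = x" "x * f = x"
    unfolding local_units_def by blast
  from lu e f obtain d where d: "d \<in> E" "is_lub {e, f} d"
    unfolding local_units_def by blast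
  then have "idem_le e d" "idem_le f d"
    unfolding is_lub_def by auto
  then have "\<forall>r\<in>insert x X. d * r = r \<and> r * d = r"
    using e(2) f(2,3) idem_le_two_sided_unit by blast
  with d(1) show ?case by blast
qed

lemma local_units_left_unit_setmult:
  assumes "local_units R E" and "R \<noteq> {}" and "x \<in> setmult R B"
  shows "\<exists>e\<in>E. e * x = x"
proof -
  obtain R' where R': "finite R'" "R' \<subseteq> R" "x \<in> setmult R' B"
    using setmult_finite_left[OF assms(3)] by blast
  then obtain e where "e \<in> E" "\<forall>r\<in>R'. e * r = r"
    using local_units_common_unit[OF assms(1,2)] by meson
  then show ?thesis
    using setmult_left_unit[OF _ R'(3)] by blast
qed

lemma local_units_right_unit_setmult:
  assumes "local_units R E" and "R \<noteq> {}" and "x \<in> setmult A R"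
  shows "\<exists>e\<in>E. x * e = x"
proof -
  obtain R' where R': "finite R'" "R' \<subseteq> R" "x \<in> setmult A R'"
    using setmult_finite_right[OF assms(3)] by blast
  then obtain e where "e \<in> E" "\<forall>r\<in>R'. r * e = r"
    using local_units_common_unit[OF assms(1,2)] by meson
  then show ?thesis
    using setmult_right_unit[OF _ R'(3)] by blast
qed

theorem lemma5p12:
  fixes G :: "('g, 'b) monoid_scheme" and Sg :: "'g \<Rightarrow> ('a::ring) set" and M :: "'g \<Rightarrow> 'a set"
  assumes "group G"
    and "is_grading G Sg"
    and "virt_eps_strong G Sg"
    and "\<forall>g\<in>carrier G. M g \<subseteq> setmult (Sg g) (Sg (inv\<^bsub>G\<^esub> g)) \<and> commuting_idems (M g) \<and> orthogonal (M g)
            \<and> local_units (setmult (Sg g) (Sg (inv\<^bsub>G\<^esub> g))) (joins (M g))"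
    and "g \<in> carrier G" and "s \<in> Sg g"
  shows "\<exists>F F' c c'. finite F \<and> F \<noteq> {} \<and> F \<subseteq> M g \<and> is_lub F c \<and>
           finite F' \<and> F' \<noteq> {} \<and> F' \<subseteq> M (inv\<^bsub>G\<^esub> g) \<and> is_lub F' c' \<and>
           c * s = s \<and> s * c' = s"
proof -
  let ?h = "inv\<^bsub>G\<^esub> g"
  have "?h \<in> carrier G" and "inv\<^bsub>G\<^esub> ?h = g"
    using assms(1,5) by (simp_all add: group.inv_closed group.inv_inv)
  then have lu_g: "local_units (setmult (Sg g) (Sg ?h)) (joins (M g))"
    and lu_h: "local_units (setmult (Sg ?h) (Sg g)) (joins (M ?h))"
    using assms(4,5) by force+
  have s: "s \<in> setmult (setmult (Sg g) (Sg ?h)) (Sg g)"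
    using assms(3,5,6) unfolding virt_eps_strong_def by blast
  obtain c where "c \<in> joins (M g)" "c * s = s"
    using local_units_left_unit_setmult[OF lu_g _ s] zero_in_setmult by blast
  moreover obtain c' where "c' \<in> joins (M ?h)" "s * c' = s"
    using local_units_right_unit_setmult[OF lu_h _ subsetD[OF setmult_assoc_subset s]]
      zero_in_setmult by blast
  ultimately show ?thesis
    unfolding joins_def by blast
qed

end
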